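(* Let $m,n\in\mathbb{N}$, $T=\{1,\dots,m\}$, $\mathcal{F}(A,b)=\{x\in\mathbb{R}^n\mid Ax\le b\}$ for $(A,b)\in\mathbb{R}^{m\times n}\times\mathbb{R}^m$, and let $(\bar A,\bar b)$ be such that $\mathcal{F}(\bar A,\bar b)$ is nonempty and unbounded. Then: (i) if $\mathcal{F}(\bar A,\bar b)=\mathbb{R}^n$, then $\operatorname{Lipusc}\mathcal{F}(\bar A,\bar b)=0$; (ii) if $n=1$ and $\mathcal{F}(\bar A,\bar b)$ equals $]-\infty,\bar x]$ or $[\bar x,+\infty[$ for some $\bar x\in\mathbb{R}$, then $$\operatorname{Lipusc}\mathcal{F}(\bar A,\bar b)=\frac{\|\bar x\|+1}{\max\{\|\bar a_t\|_*:\ t\in T_{\bar A,\bar b}(\bar x)\}};$$ (iii) otherwise, $\operatorname{Lipusc}\mathcal{F}(\bar A,\bar b)=+\infty$.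
   Context: $\mathbb{R}^n$ carries an arbitrary norm $\|\cdot\|$ with dual norm $\|u\|_*=\max_{\|x\|\le1}|u'x|$; the parameter space $\mathbb{R}^{m\times n}\times\mathbb{R}^m$ carries the norm $\|(A,b)\|=\max_{t\in T}\max\{\|a_t\|_*,|b_t|\}$, where $a_t'$ is the $t$-th row of $A$ (and $\bar a_t'$ the $t$-th row of $\bar A$). $T_{A,b}(x)=\{t\in T\mid a_t'x=b_t\}$ is the set of active indices at $x$. $\operatorname{dist}(x,\Omega)=\inf_{\omega\in\Omega}\|x-\omega\|$ with $\inf\emptyset=+\infty$. For $\mathcal{F}(\bar A,\bar b)\neq\emptyset$, $\operatorname{Lipusc}\mathcal{F}(\bar A,\bar b)$ is the infimum of all $\kappa\ge0$ for which there is a neighborhood $V$ of $(\bar A,\bar b)$ with $\operatorname{dist}(x,\mathcal{F}(\bar A,\bar b))\le\kappa\|(A,b)-(\bar A,\bar b)\|$ for all $(A,b)\in V$ and all $x\in\mathcal{F}(A,b)$ (infimum of the empty set is $+\infty$). *)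

theory Defs
  imports "HOL-Analysis.Analysis"
begin

definition is_norm :: "(real^'n \<Rightarrow> real) \<Rightarrow> bool" where
  "is_norm N \<longleftrightarrow> (\<forall>x. 0 \<le> N x) \<and> (\<forall>x. N x = 0 \<longleftrightarrow> x = 0)
     \<and> (\<forall>c x. N (c *\<^sub>R x) = \<bar>c\<bar> * N x) \<and> (\<forall>x y. N (x + y) \<le> N x + N y)"

definition dual_norm :: "(real^'n \<Rightarrow> real) \<Rightarrow> real^'n \<Rightarrow> real" where
  "dual_norm N u = Sup {\<bar>u \<bullet> x\<bar> | x. N x \<le> 1}"

definition param_norm ::
  "(real^'n \<Rightarrow> real) \<Rightarrow> real^'n^'m::finite \<Rightarrow> real^'m \<Rightarrow> real" where
  "param_norm N A b = Max (range (\<lambda>t. max (dual_norm N (A $ t)) \<bar>b $ t\<bar>))"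

definition feas :: "real^'n^'m \<Rightarrow> real^'m \<Rightarrow> (real^'n) set" where
  "feas A b = {x. \<forall>t. (A $ t) \<bullet> x \<le> b $ t}"

definition active :: "real^'n^'m \<Rightarrow> real^'m \<Rightarrow> real^'n \<Rightarrow> 'm set" where
  "active A b x = {t. (A $ t) \<bullet> x = b $ t}"

text \<open>Distance from a point to a set w.r.t. N, with inf of the empty set = +infinity.\<close>
definition ndist :: "(real^'n \<Rightarrow> real) \<Rightarrow> real^'n \<Rightarrow> (real^'n) set \<Rightarrow> ereal" where
  "ndist N x \<Omega> = Inf ((\<lambda>\<omega>. ereal (N (x - \<omega>))) ` \<Omega>)"

text \<open>Lipschitz upper semicontinuity modulus of the feasible set mapping at (A0,b0).
  Neighborhoods are w.r.t. the parameter norm (balls suffice).\<close>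
definition Lipusc :: "(real^'n \<Rightarrow> real) \<Rightarrow> real^'n^'m::finite \<Rightarrow> real^'m \<Rightarrow> ereal" where
  "Lipusc N A0 b0 = Inf (ereal ` {\<kappa>. 0 \<le> \<kappa> \<and> (\<exists>\<epsilon>>0. \<forall>A b.
      param_norm N (A - A0) (b - b0) < \<epsilon> \<longrightarrow>
      (\<forall>x\<in>feas A b. ndist N x (feas A0 b0) \<le> ereal (\<kappa> * param_norm N (A - A0) (b - b0))))})"

end

theory Submission
  imports Defs
begin

text \<open>
  Part (i) is immediate: every point is feasible for the nominal system.

  In dimension one, the coordinate \<open>z = c x\<^sub>i\<^sub>0\<close> with \<open>|c| = N 1\<close> turns \<open>N\<close> into \<open>|z|\<close>, a row
  \<open>a\<^sub>t\<close> into the slope \<open>a\<^sub>t / c\<close> whose dual norm is \<open>|a\<^sub>t / c|\<close>, and the feasible set into a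
  half-line \<open>z \<le> x\<^sub>b\<close> (the sign of \<open>c\<close> fixes the orientation). All active slopes are
  nonnegative; let \<open>M\<close> be the largest. A perturbation of size \<open>\<rho>\<close> keeps the active constraint
  of slope \<open>M\<close> at slope at least \<open>M - \<rho>\<close>, so the endpoint moves by at most
  \<open>\<rho> (|x\<^sub>b| + 1) / (M - \<rho>)\<close>; conversely, lowering every active slope by \<open>\<rho> sgn x\<^sub>b\<close> and
  raising its right-hand side by \<open>\<rho>\<close> moves it by \<open>\<rho> (|x\<^sub>b| + 1) / (M + \<rho>)\<close>. Hence the
  modulus is \<open>(|x\<^sub>b| + 1) / M\<close>.

  In dimension at least two, an unbounded polyhedron other than the whole space has a recession
  direction \<open>d\<close> on which some nonzero row \<open>e = a\<^sub>t\<^sub>0\<close> is tight. Tilting every row \<open>a\<^sub>t\<close> by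
  \<open>\<delta> |a\<^sub>t \<bullet> e| l\<close>, where \<open>l \<bullet> d = 1\<close> and \<open>l \<bullet> e = 0\<close>, is an arbitrarily small perturbation
  under which all points \<open>x\<^sub>0 + R d + \<delta> (l \<bullet> x\<^sub>0 + R) e\<close> are feasible. Their value of
  \<open>e \<bullet> x\<close> grows linearly in \<open>R\<close> while the feasible set lies in \<open>e \<bullet> x \<le> b\<^sub>t\<^sub>0\<close>, so they are
  arbitrarily far from it and no finite modulus exists.
\<close>

section \<open>Equivalence with the Euclidean norm\<close>

lemma is_norm_zero: "is_norm N \<Longrightarrow> N 0 = 0"
  and is_norm_nonneg: "is_norm N \<Longrightarrow> 0 \<le> N x"
  and is_norm_eq_0: "is_norm N \<Longrightarrow> N x = 0 \<longleftrightarrow> x = 0"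
  and is_norm_scaleR: "is_norm N \<Longrightarrow> N (c *\<^sub>R x) = \<bar>c\<bar> * N x"
  and is_norm_triangle: "is_norm N \<Longrightarrow> N (x + y) \<le> N x + N y"
  by (simp_all add: is_norm_def)

lemma is_norm_minus_commute: "is_norm N \<Longrightarrow> N (x - y) = N (y - x)"
  using is_norm_scaleR[of N "-1" "x - y"] by simp

lemma is_norm_sum: "is_norm N \<Longrightarrow> N (sum f S) \<le> (\<Sum>i\<in>S. N (f i))"
  by (induction S rule: infinite_finite_induct)
    (auto simp: is_norm_zero intro: order_trans[OF is_norm_triangle])

lemma is_norm_le_norm:
  fixes N :: "real^'n \<Rightarrow> real"
  assumes "is_norm N"
  obtains B where "0 \<le> B" "\<And>x. N x \<le> B * norm x"
proof
  let ?B = "\<Sum>i\<in>UNIV. N (axis i (1::real))"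
  show "0 \<le> ?B" by (intro sum_nonneg is_norm_nonneg[OF assms])
  fix x :: "real^'n"
  have "N x = N (\<Sum>i\<in>UNIV. (x$i) *\<^sub>R axis i 1)"
    by (metis (no_types) basis_expansion scalar_mult_eq_scaleR)
  also have "\<dots> \<le> (\<Sum>i\<in>UNIV. \<bar>x$i\<bar> * N (axis i 1))"
    using is_norm_sum[OF assms, of "\<lambda>i. (x$i) *\<^sub>R axis i 1" UNIV]
    by (simp add: is_norm_scaleR[OF assms])
  also have "\<dots> \<le> (\<Sum>i\<in>UNIV. norm x * N (axis i 1))"
    by (intro sum_mono mult_right_mono component_le_norm_cart is_norm_nonneg[OF assms])
  finally show "N x \<le> ?B * norm x" by (simp add: sum_distrib_left mult.commute)
qed

lemma continuous_on_is_norm: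
  fixes N :: "real^'n \<Rightarrow> real"
  assumes "is_norm N"
  shows "continuous_on S N"
proof -
  obtain B where B: "0 \<le> B" "\<And>x. N x \<le> B * norm x" using is_norm_le_norm[OF assms] by blast
  have "dist (N x) (N y) \<le> B * dist x y" for x y
    using is_norm_triangle[OF assms, of "x - y" y] is_norm_triangle[OF assms, of "y - x" x]
      is_norm_minus_commute[OF assms, of x y] B(2)[of "x - y"]
    by (simp add: dist_real_def dist_norm)
  then show ?thesis using B(1) by (intro lipschitz_on_continuous_on lipschitz_onI)
qed

lemma is_norm_ge_norm:
  fixes N :: "real^'n \<Rightarrow> real"
  assumes "is_norm N"
  obtains m where "0 < m" "\<And>x. m * norm x \<le> N x"
proof -
  have "axis undefined 1 \<in> sphere (0::real^'n) 1" by simp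
  then obtain x0 where x0: "x0 \<in> sphere 0 1" "\<And>y. y \<in> sphere 0 1 \<Longrightarrow> N x0 \<le> N y"
    using continuous_attains_inf[OF compact_sphere _ continuous_on_is_norm[OF assms]] by blast
  have "0 < N x0"
    using x0(1) is_norm_eq_0[OF assms, of x0] is_norm_nonneg[OF assms, of x0] by auto
  moreover have "N x0 * norm x \<le> N x" for x
  proof (cases "x = 0")
    case False
    then have "N x0 \<le> N ((1 / norm x) *\<^sub>R x)" by (intro x0(2)) simp
    with False show ?thesis by (simp add: is_norm_scaleR[OF assms] field_simps)
  qed (simp add: is_norm_zero[OF assms])
  ultimately show thesis by (rule that)
qed

lemma dual_norm_le_norm:
  assumes "is_norm N" "0 < m" "\<And>x. m * norm x \<le> N x"
  shows "dual_norm N u \<le> norm u / m"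
  unfolding dual_norm_def
proof (rule cSup_least)
  show "{\<bar>u \<bullet> x\<bar> |x. N x \<le> 1} \<noteq> {}" using is_norm_zero[OF assms(1)] by (auto intro!: exI[of _ 0])
  fix v assume "v \<in> {\<bar>u \<bullet> x\<bar> |x. N x \<le> 1}"
  then obtain x where x: "v = \<bar>u \<bullet> x\<bar>" "N x \<le> 1" by auto
  have "norm x \<le> 1 / m" using assms(2) assms(3)[of x] x(2) by (simp add: field_simps)
  then have "norm u * norm x \<le> norm u / m" by (simp add: mult_left_mono divide_inverse)
  then show "v \<le> norm u / m" using x(1) Cauchy_Schwarz_ineq2[of u x] by simp
qed

lemma bounded_iff_is_norm_bounded:
  fixes N :: "real^'n \<Rightarrow> real"
  assumes "is_norm N"
  shows "bounded S \<longleftrightarrow> (\<exists>M. \<forall>x\<in>S. N x \<le> M)"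
proof
  obtain B where B: "0 \<le> B" "\<And>x. N x \<le> B * norm x" using is_norm_le_norm[OF assms] by blast
  assume "bounded S"
  then obtain M where "\<forall>x\<in>S. norm x \<le> M" by (auto simp: bounded_iff)
  then have "\<forall>x\<in>S. N x \<le> B * M" using B by (meson mult_left_mono order_trans)
  then show "\<exists>M. \<forall>x\<in>S. N x \<le> M" by blast
next
  obtain m where m: "0 < m" "\<And>x. m * norm x \<le> N x" using is_norm_ge_norm[OF assms] by blast
  assume "\<exists>M. \<forall>x\<in>S. N x \<le> M"
  then obtain M where "\<forall>x\<in>S. N x \<le> M" by blast
  then have "\<forall>x\<in>S. m * norm x \<le> M" using m(2) order_trans by blast
  then have "\<forall>x\<in>S. norm x \<le> M / m" using m(1) by (simp add: pos_le_divide_eq mult.commute)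
  then show "bounded S" by (auto simp: bounded_iff)
qed

section \<open>The modulus as an infimum\<close>

definition Lipusc_moduli :: "(real^'n \<Rightarrow> real) \<Rightarrow> real^'n^'m::finite \<Rightarrow> real^'m \<Rightarrow> real set" where
  "Lipusc_moduli N A0 b0 = {\<kappa>. 0 \<le> \<kappa> \<and> (\<exists>\<epsilon>>0. \<forall>A b.
      param_norm N (A - A0) (b - b0) < \<epsilon> \<longrightarrow>
      (\<forall>x\<in>feas A b. ndist N x (feas A0 b0) \<le> ereal (\<kappa> * param_norm N (A - A0) (b - b0))))}"

lemma Lipusc_eq_Inf_moduli: "Lipusc N A0 b0 = Inf (ereal ` Lipusc_moduli N A0 b0)"
  by (simp add: Lipusc_def Lipusc_moduli_def)

lemma Lipusc_moduli_nonneg: "\<kappa> \<in> Lipusc_moduli N A0 b0 \<Longrightarrow> 0 \<le> \<kappa>"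
  by (simp add: Lipusc_moduli_def)

lemma param_norm_ge: "max (dual_norm N (A $ t)) \<bar>b $ t\<bar> \<le> param_norm N A b"
  unfolding param_norm_def by (rule Max_ge) auto

lemma param_norm_nonneg: "0 \<le> param_norm N A b"
  by (meson abs_ge_zero max.coboundedI2 order_trans param_norm_ge)

lemma param_norm_le: "(\<And>t. max (dual_norm N (A $ t)) \<bar>b $ t\<bar> \<le> r) \<Longrightarrow> param_norm N A b \<le> r"
  unfolding param_norm_def by (subst Max_le_iff) auto

lemma param_norm_less: "(\<And>t. max (dual_norm N (A $ t)) \<bar>b $ t\<bar> < r) \<Longrightarrow> param_norm N A b < r"
  unfolding param_norm_def by (subst Max_less_iff) auto

lemma ndist_le: "\<omega> \<in> \<Omega> \<Longrightarrow> ndist N x \<Omega> \<le> ereal (N (x - \<omega>))"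
  unfolding ndist_def by (rule INF_lower)

lemma ndist_ge: "(\<And>\<omega>. \<omega> \<in> \<Omega> \<Longrightarrow> r \<le> N (x - \<omega>)) \<Longrightarrow> ereal r \<le> ndist N x \<Omega>"
  unfolding ndist_def by (rule INF_greatest) simp

lemma Inf_ereal_image_eq:
  fixes K :: "real set"
  assumes "\<And>\<kappa>. L < \<kappa> \<Longrightarrow> \<kappa> \<in> K" "\<And>\<kappa>. \<kappa> \<in> K \<Longrightarrow> L \<le> \<kappa>"
  shows "Inf (ereal ` K) = ereal L"
proof (rule antisym)
  show "ereal L \<le> Inf (ereal ` K)" using assms(2) by (auto intro!: Inf_greatest)
  show "Inf (ereal ` K) \<le> ereal L"
  proof (rule dense_ge)
    fix y assume "ereal L < y"
    then show "Inf (ereal ` K) \<le> y"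
      using assms(1) by (cases y) (auto intro: Inf_lower)
  qed
qed

lemma Lipusc_UNIV:
  assumes "is_norm N" "feas A0 b0 = UNIV"
  shows "Lipusc N A0 b0 = 0"
proof -
  have "ndist N x (feas A0 b0) \<le> ereal (\<kappa> * param_norm N (A - A0) (b - b0))" if "0 \<le> \<kappa>" for x \<kappa> A b
  proof -
    have "ndist N x (feas A0 b0) \<le> ereal (N (x - x))" using assms(2) by (intro ndist_le) simp
    also have "\<dots> \<le> ereal (\<kappa> * param_norm N (A - A0) (b - b0))"
      using mult_nonneg_nonneg[OF that param_norm_nonneg] by (simp add: is_norm_zero[OF assms(1)])
    finally show ?thesis .
  qed
  then have "\<kappa> \<in> Lipusc_moduli N A0 b0" if "0 < \<kappa>" for \<kappa>
    using that unfolding Lipusc_moduli_def by (auto intro!: exI[of _ 1])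
  then have "Inf (ereal ` Lipusc_moduli N A0 b0) = ereal 0"
    by (intro Inf_ereal_image_eq Lipusc_moduli_nonneg)
  then show ?thesis by (simp add: Lipusc_eq_Inf_moduli zero_ereal_def)
qed

section \<open>Half-lines in dimension one\<close>

locale lower_halfline =
  fixes a b :: "'m::finite \<Rightarrow> real" and xb :: real
  assumes feasible_iff: "(\<forall>t. a t * z \<le> b t) \<longleftrightarrow> z \<le> xb"
begin

definition max_active_slope :: real where
  "max_active_slope = Max (a ` {t. a t * xb = b t})"

lemma feasible_bound: "a t * xb \<le> b t"
  using feasible_iff by blast

lemma slope_nonneg: "0 \<le> a t"
proof (rule ccontr)
  assume "\<not> 0 \<le> a t"
  define z where "z = min xb (b t / a t - 1)"
  have "a t * z \<le> b t" using feasible_iff[of z] by (simp add: z_def)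
  moreover have "z < b t / a t" by (simp add: z_def)
  ultimately show False using \<open>\<not> 0 \<le> a t\<close> by (simp add: neg_less_divide_eq mult.commute)
qed

lemma eventually_inactive_feasible:
  "\<forall>\<^sub>F z in nhds xb. \<forall>t. a t * xb \<noteq> b t \<longrightarrow> a t * z \<le> b t"
proof (rule eventually_all_finite)
  fix t
  show "\<forall>\<^sub>F z in nhds xb. a t * xb \<noteq> b t \<longrightarrow> a t * z \<le> b t"
  proof (cases "a t * xb = b t")
    case False
    then have "a t * xb < b t" using feasible_bound[of t] by simp
    moreover have "((\<lambda>z. a t * z) \<longlongrightarrow> a t * xb) (nhds xb)"
      by (intro tendsto_mult_left filterlim_ident)
    ultimately have "\<forall>\<^sub>F z in nhds xb. a t * z < b t" by (simp add: order_tendstoD(2))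
    then show ?thesis by (rule eventually_mono) simp
  qed simp
qed

lemma exists_active_pos: "\<exists>t. a t * xb = b t \<and> 0 < a t"
proof (rule ccontr)
  assume "\<nexists>t. a t * xb = b t \<and> 0 < a t"
  then have active_flat: "a t = 0 \<and> b t = 0" if "a t * xb = b t" for t
    using that slope_nonneg[of t] by force
  have "\<forall>\<^sub>F z in at_right xb. \<forall>t. a t * xb \<noteq> b t \<longrightarrow> a t * z \<le> b t"
    using eventually_inactive_feasible tendsto_ident_at by (rule eventually_compose_filterlim)
  then have "\<forall>\<^sub>F z in at_right xb. z \<le> xb"
    by (rule eventually_mono) (metis active_flat feasible_iff mult_zero_left order_refl)
  with eventually_at_right_less have "\<forall>\<^sub>F z in at_right xb. False"
    by (rule eventually_elim2) simp
  then show False by simp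
qed

lemma max_active_slope_pos: "0 < max_active_slope"
  and active_slope_le: "a t * xb = b t \<Longrightarrow> a t \<le> max_active_slope"
  and exists_active_max: "\<exists>t. a t * xb = b t \<and> a t = max_active_slope"
proof -
  obtain t1 where t1: "a t1 * xb = b t1" "0 < a t1" using exists_active_pos by blast
  then have ne: "a ` {t. a t * xb = b t} \<noteq> {}" by blast
  show le: "a t * xb = b t \<Longrightarrow> a t \<le> max_active_slope" for t
    unfolding max_active_slope_def by (rule Max_ge) auto
  show "0 < max_active_slope" using le[OF t1(1)] t1(2) by linarith
  show "\<exists>t. a t * xb = b t \<and> a t = max_active_slope"
    using Max_in[OF _ ne] unfolding max_active_slope_def by fastforce
qed

lemma perturbed_excess_le:
  assumes "(\<bar>xb\<bar> + 1) / max_active_slope < \<kappa>"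
  obtains \<epsilon> where "0 < \<epsilon>"
    "\<And>\<rho> a' b' z. \<rho> < \<epsilon> \<Longrightarrow> (\<And>t. \<bar>a' t - a t\<bar> \<le> \<rho> \<and> \<bar>b' t - b t\<bar> \<le> \<rho>)
      \<Longrightarrow> (\<And>t. a' t * z \<le> b' t) \<Longrightarrow> z - xb \<le> \<kappa> * \<rho>"
proof -
  let ?M = max_active_slope
  obtain s where s: "a s * xb = b s" "a s = ?M" using exists_active_max by blast
  have "0 < (\<bar>xb\<bar> + 1) / ?M" using max_active_slope_pos by simp
  then have "0 < \<kappa>" using assms by linarith
  define Q where "Q = (\<bar>xb\<bar> + 1) / \<kappa>"
  have Q: "0 < Q" "Q < ?M"
    using \<open>0 < \<kappa>\<close> assms max_active_slope_pos by (simp_all add: Q_def field_simps)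
  show thesis
  proof (rule that)
    show "0 < ?M - Q" using Q by simp
    fix \<rho> a' b' z
    assume \<rho>: "\<rho> < ?M - Q" and close: "\<And>t. \<bar>a' t - a t\<bar> \<le> \<rho> \<and> \<bar>b' t - b t\<bar> \<le> \<rho>"
      and feasible: "\<And>t. a' t * z \<le> b' t"
    have "0 \<le> \<rho>" using close[of s] by linarith
    show "z - xb \<le> \<kappa> * \<rho>"
    proof (cases "z \<le> xb")
      case True
      then show ?thesis using mult_nonneg_nonneg[OF less_imp_le[OF \<open>0 < \<kappa>\<close>] \<open>0 \<le> \<rho>\<close>] by linarith
    next
      case False
      have "Q < a' s" using close[of s] s(2) \<rho> by linarith
      then have "Q * (z - xb) \<le> a' s * (z - xb)" using False by (intro mult_right_mono) auto
      also have "\<dots> \<le> (b' s - b s) + (a s - a' s) * xb" using feasible[of s] s(1) by (simp add: algebra_simps)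
      also have "\<dots> \<le> \<rho> + \<bar>a s - a' s\<bar> * \<bar>xb\<bar>"
        using abs_le_D1[OF conjunct2[OF close[of s]]] abs_ge_self[of "(a s - a' s) * xb"]
        unfolding abs_mult[symmetric] by linarith
      also have "\<dots> \<le> \<rho> + \<rho> * \<bar>xb\<bar>"
        using close[of s] by (simp add: mult_right_mono abs_minus_commute)
      also have "\<dots> = Q * (\<kappa> * \<rho>)" using \<open>0 < \<kappa>\<close> by (simp add: Q_def field_simps)
      finally show ?thesis using Q(1) by simp
    qed
  qed
qed

definition endpoint_shift :: "real \<Rightarrow> real" where
  "endpoint_shift \<rho> = \<rho> * (\<bar>xb\<bar> + 1) / (max_active_slope + \<rho>)"

lemma eventually_endpoint_shift:
  assumes "\<kappa> < (\<bar>xb\<bar> + 1) / max_active_slope"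
  shows "\<forall>\<^sub>F \<rho> in at_right 0. \<kappa> * \<rho> < endpoint_shift \<rho> \<and>
    (\<forall>t. a t * xb \<noteq> b t \<longrightarrow> a t * (xb + endpoint_shift \<rho>) \<le> b t)"
proof -
  let ?M = max_active_slope
  have "(endpoint_shift \<longlongrightarrow> 0) (at_right 0)"
    unfolding endpoint_shift_def using max_active_slope_pos by (auto intro!: tendsto_eq_intros)
  then have "((\<lambda>\<rho>. xb + endpoint_shift \<rho>) \<longlongrightarrow> xb) (at_right 0)"
    using tendsto_add[OF tendsto_const] by fastforce
  then have inactive: "\<forall>\<^sub>F \<rho> in at_right 0.
      \<forall>t. a t * xb \<noteq> b t \<longrightarrow> a t * (xb + endpoint_shift \<rho>) \<le> b t"
    by (rule eventually_compose_filterlim[OF eventually_inactive_feasible])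
  have "((\<lambda>\<rho>. \<kappa> * (?M + \<rho>)) \<longlongrightarrow> \<kappa> * ?M) (at_right 0)"
    by (auto intro!: tendsto_eq_intros)
  then have small: "\<forall>\<^sub>F \<rho> in at_right 0. \<kappa> * (?M + \<rho>) < \<bar>xb\<bar> + 1"
    using assms max_active_slope_pos by (intro order_tendstoD(2)) (auto simp: field_simps)
  have shift_gt: "\<kappa> * \<rho> < endpoint_shift \<rho>" if "0 < \<rho>" "\<kappa> * (?M + \<rho>) < \<bar>xb\<bar> + 1" for \<rho>
  proof -
    have "\<kappa> * \<rho> * (?M + \<rho>) < \<rho> * (\<bar>xb\<bar> + 1)"
      using mult_strict_left_mono[OF that(2,1)] by (simp add: algebra_simps)
    then show ?thesis using that(1) max_active_slope_pos by (simp add: endpoint_shift_def field_simps)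
  qed
  from inactive small eventually_at_right_less show ?thesis
    by eventually_elim (simp add: shift_gt)
qed

lemma tilted_endpoint_feasible:
  assumes "0 \<le> \<rho>" "a t * xb \<noteq> b t \<Longrightarrow> a t * (xb + endpoint_shift \<rho>) \<le> b t"
  shows "(if a t * xb = b t then a t - \<rho> * sgn xb else a t) * (xb + endpoint_shift \<rho>)
    \<le> (if a t * xb = b t then b t + \<rho> else b t)"
proof (cases "a t * xb = b t")
  case True
  have M\<rho>: "0 < max_active_slope + \<rho>" using assms(1) max_active_slope_pos by simp
  have "a t - \<rho> * sgn xb \<le> max_active_slope + \<rho>"
    using active_slope_le[OF True] assms(1) by (auto simp: sgn_if)
  then have "(a t - \<rho> * sgn xb) * endpoint_shift \<rho> \<le> (max_active_slope + \<rho>) * endpoint_shift \<rho>"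
    using assms(1) M\<rho> by (intro mult_right_mono) (simp_all add: endpoint_shift_def)
  moreover have "(max_active_slope + \<rho>) * endpoint_shift \<rho> = \<rho> * (\<bar>xb\<bar> + 1)"
    using M\<rho> by (simp add: endpoint_shift_def)
  moreover have "sgn xb * xb = \<bar>xb\<bar>" by (simp add: sgn_if)
  ultimately show ?thesis using True by (simp add: algebra_simps)
qed (simp add: assms(2))

lemma perturbed_excess_gt:
  assumes "\<kappa> < (\<bar>xb\<bar> + 1) / max_active_slope" "0 < \<epsilon>"
  obtains \<rho> a' b' z where "\<rho> < \<epsilon>" "\<And>t. \<bar>a' t - a t\<bar> \<le> \<rho> \<and> \<bar>b' t - b t\<bar> \<le> \<rho>"
    "\<And>t. a' t * z \<le> b' t" "\<kappa> * \<rho> < z - xb"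
proof -
  have "\<forall>\<^sub>F \<rho> in at_right 0. \<rho> < \<epsilon>" using assms(2) by (intro order_tendstoD(2)) auto
  with eventually_endpoint_shift[OF assms(1)] eventually_at_right_less
  have "\<forall>\<^sub>F \<rho> in at_right 0. 0 < \<rho> \<and> \<rho> < \<epsilon> \<and> \<kappa> * \<rho> < endpoint_shift \<rho> \<and>
      (\<forall>t. a t * xb \<noteq> b t \<longrightarrow> a t * (xb + endpoint_shift \<rho>) \<le> b t)"
    by eventually_elim simp
  then obtain \<rho> where "0 < \<rho>" "\<rho> < \<epsilon>" "\<kappa> * \<rho> < endpoint_shift \<rho>"
    and inactive: "\<And>t. a t * xb \<noteq> b t \<Longrightarrow> a t * (xb + endpoint_shift \<rho>) \<le> b t"
    using eventually_happens'[OF trivial_limit_at_right_real] by blast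
  show thesis
  proof (rule that)
    show "\<bar>(if a t * xb = b t then a t - \<rho> * sgn xb else a t) - a t\<bar> \<le> \<rho> \<and>
      \<bar>(if a t * xb = b t then b t + \<rho> else b t) - b t\<bar> \<le> \<rho>" for t
      using \<open>0 < \<rho>\<close> by (auto simp: abs_mult abs_sgn_eq)
    show "(if a t * xb = b t then a t - \<rho> * sgn xb else a t) * (xb + endpoint_shift \<rho>)
      \<le> (if a t * xb = b t then b t + \<rho> else b t)" for t
      using \<open>0 < \<rho>\<close> inactive by (intro tilted_endpoint_feasible) auto
  qed (use \<open>\<rho> < \<epsilon>\<close> \<open>\<kappa> * \<rho> < endpoint_shift \<rho>\<close> in simp_all)
qed

end

lemma inner_one_dim:
  assumes "UNIV = {i0}"
  shows "u \<bullet> x = u $ i0 * x $ i0"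
  unfolding inner_vec_def assms by simp

lemma is_norm_one_dim:
  assumes "is_norm N" "UNIV = {i0}"
  shows "N x = \<bar>x $ i0\<bar> * N (vec 1)"
proof -
  have "x = (x $ i0) *\<^sub>R vec 1" using assms(2) by (auto simp: vec_eq_iff)
  then show ?thesis by (metis assms(1) is_norm_scaleR)
qed

lemma is_norm_vec_one_pos:
  fixes N :: "real^'n \<Rightarrow> real"
  assumes "is_norm N"
  shows "0 < N (vec 1)"
proof -
  have "(vec 1 :: real^'n) \<noteq> 0" by (simp add: vec_eq_iff)
  then show ?thesis using is_norm_eq_0[OF assms] is_norm_nonneg[OF assms] by (metis order_less_le)
qed

lemma dual_norm_one_dim:
  assumes "is_norm N" "UNIV = {i0}"
  shows "dual_norm N u = \<bar>u $ i0\<bar> / N (vec 1)"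
  unfolding dual_norm_def
proof (rule cSup_eq_maximum)
  let ?c = "N (vec 1)"
  have c: "0 < ?c" using is_norm_vec_one_pos[OF assms(1)] .
  have "N ((1 / ?c) *\<^sub>R vec 1) \<le> 1" using c by (simp add: is_norm_scaleR[OF assms(1)])
  moreover have "\<bar>u \<bullet> (1 / ?c) *\<^sub>R vec 1\<bar> = \<bar>u $ i0\<bar> / ?c"
    using c by (simp add: inner_one_dim[OF assms(2)] abs_mult)
  ultimately show "\<bar>u $ i0\<bar> / ?c \<in> {\<bar>u \<bullet> x\<bar> |x. N x \<le> 1}" by (metis (mono_tags, lifting) mem_Collect_eq)
  fix v assume "v \<in> {\<bar>u \<bullet> x\<bar> |x. N x \<le> 1}"
  then obtain x where x: "v = \<bar>u \<bullet> x\<bar>" "N x \<le> 1" by auto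
  then have "\<bar>x $ i0\<bar> \<le> 1 / ?c" using c is_norm_one_dim[OF assms, of x] by (simp add: field_simps)
  then have "\<bar>u $ i0\<bar> * \<bar>x $ i0\<bar> \<le> \<bar>u $ i0\<bar> / ?c" by (simp add: mult_left_mono divide_inverse)
  then show "v \<le> \<bar>u $ i0\<bar> / ?c" using x(1) by (simp add: inner_one_dim[OF assms(2)] abs_mult)
qed

context
  fixes N :: "real^'n \<Rightarrow> real" and A0 :: "real^'n^'m::finite" and b0 :: "real^'m"
    and i0 :: 'n and c :: real and xbar :: "real^'n"
  assumes norm: "is_norm N" and one_dim: "UNIV = {i0}" and scale: "\<bar>c\<bar> = N (vec 1)"
    and halfline: "feas A0 b0 = {x. c * x $ i0 \<le> c * xbar $ i0}"
begin

lemma scale_nonzero: "c \<noteq> 0"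
  using scale is_norm_vec_one_pos[OF norm] by auto

lemma inner_eq_slope_coord: "u \<bullet> x = (u $ i0 / c) * (c * x $ i0)"
  using scale_nonzero by (simp add: inner_one_dim[OF one_dim])

lemma norm_eq_coord: "N x = \<bar>c * x $ i0\<bar>"
  using is_norm_one_dim[OF norm one_dim, of x] scale by (simp add: abs_mult)

lemma dual_norm_eq_slope: "dual_norm N u = \<bar>u $ i0 / c\<bar>"
  by (simp add: dual_norm_one_dim[OF norm one_dim] scale)

lemma coord_of_scalar: "c * (vec (z / c) :: real^'n) $ i0 = z"
  using scale_nonzero by simp

interpretation lower_halfline "\<lambda>t. A0 $ t $ i0 / c" "\<lambda>t. b0 $ t" "c * xbar $ i0"
proof
  fix z
  have "(\<forall>t. A0 $ t $ i0 / c * z \<le> b0 $ t) \<longleftrightarrow> vec (z / c) \<in> feas A0 b0"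
    using scale_nonzero by (simp add: feas_def inner_eq_slope_coord coord_of_scalar)
  also have "\<dots> \<longleftrightarrow> z \<le> c * xbar $ i0" using scale_nonzero by (simp add: halfline)
  finally show "(\<forall>t. A0 $ t $ i0 / c * z \<le> b0 $ t) \<longleftrightarrow> z \<le> c * xbar $ i0" .
qed

lemma ndist_halfline: "ndist N x (feas A0 b0) = ereal (max 0 (c * x $ i0 - c * xbar $ i0))"
proof (rule antisym)
  have dist_coord: "N (x - y) = \<bar>c * x $ i0 - c * y $ i0\<bar>" for y
    by (simp add: norm_eq_coord right_diff_distrib)
  show "ndist N x (feas A0 b0) \<le> ereal (max 0 (c * x $ i0 - c * xbar $ i0))"
  proof (cases "c * x $ i0 \<le> c * xbar $ i0")
    case True
    then have "ndist N x (feas A0 b0) \<le> ereal (N (x - x))" by (intro ndist_le) (simp add: halfline)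
    also have "\<dots> \<le> ereal (max 0 (c * x $ i0 - c * xbar $ i0))" by (simp add: is_norm_zero[OF norm])
    finally show ?thesis .
  next
    case False
    have "ndist N x (feas A0 b0) \<le> ereal (N (x - xbar))" by (intro ndist_le) (simp add: halfline)
    also have "\<dots> = ereal (max 0 (c * x $ i0 - c * xbar $ i0))"
      using False unfolding dist_coord by (simp add: max_def)
    finally show ?thesis .
  qed
  show "ereal (max 0 (c * x $ i0 - c * xbar $ i0)) \<le> ndist N x (feas A0 b0)"
  proof (rule ndist_ge)
    fix \<omega> assume "\<omega> \<in> feas A0 b0"
    then have "c * \<omega> $ i0 \<le> c * xbar $ i0" by (simp add: halfline)
    then show "max 0 (c * x $ i0 - c * xbar $ i0) \<le> N (x - \<omega>)"
      unfolding dist_coord by linarith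
  qed
qed

lemma Lipusc_modulus_above:
  assumes "(\<bar>c * xbar $ i0\<bar> + 1) / max_active_slope < \<kappa>"
  shows "\<kappa> \<in> Lipusc_moduli N A0 b0"
proof -
  obtain \<epsilon> where "0 < \<epsilon>" and excess: "\<And>\<rho> a' b' z. \<rho> < \<epsilon> \<Longrightarrow>
      (\<And>t. \<bar>a' t - A0 $ t $ i0 / c\<bar> \<le> \<rho> \<and> \<bar>b' t - b0 $ t\<bar> \<le> \<rho>)
      \<Longrightarrow> (\<And>t. a' t * z \<le> b' t) \<Longrightarrow> z - c * xbar $ i0 \<le> \<kappa> * \<rho>"
    using perturbed_excess_le[OF assms] by blast
  have "0 < (\<bar>c * xbar $ i0\<bar> + 1) / max_active_slope" using max_active_slope_pos by simp
  then have "0 < \<kappa>" using assms by linarith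
  have "ndist N x (feas A0 b0) \<le> ereal (\<kappa> * param_norm N (A - A0) (b - b0))"
    if "param_norm N (A - A0) (b - b0) < \<epsilon>" "x \<in> feas A b" for A b x
  proof -
    let ?\<rho> = "param_norm N (A - A0) (b - b0)"
    have "\<bar>A $ t $ i0 / c - A0 $ t $ i0 / c\<bar> \<le> ?\<rho> \<and> \<bar>b $ t - b0 $ t\<bar> \<le> ?\<rho>" for t
      using param_norm_ge[where N=N and A="A - A0" and b="b - b0" and t=t]
      by (simp add: dual_norm_eq_slope diff_divide_distrib)
    moreover have "A $ t $ i0 / c * (c * x $ i0) \<le> b $ t" for t
      using that(2) by (simp add: feas_def inner_eq_slope_coord)
    ultimately have "c * x $ i0 - c * xbar $ i0 \<le> \<kappa> * ?\<rho>"
      using excess[OF that(1), of "\<lambda>t. A $ t $ i0 / c" "\<lambda>t. b $ t"] by blast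
    then show ?thesis
      using mult_nonneg_nonneg[OF less_imp_le[OF \<open>0 < \<kappa>\<close>] param_norm_nonneg]
      by (simp add: ndist_halfline)
  qed
  then show ?thesis
    using \<open>0 < \<epsilon>\<close> \<open>0 < \<kappa>\<close> unfolding Lipusc_moduli_def by auto
qed

lemma Lipusc_modulus_below:
  assumes "\<kappa> \<in> Lipusc_moduli N A0 b0"
  shows "(\<bar>c * xbar $ i0\<bar> + 1) / max_active_slope \<le> \<kappa>"
proof (rule ccontr)
  assume less: "\<not> ?thesis"
  have "0 \<le> \<kappa>" using Lipusc_moduli_nonneg[OF assms] .
  obtain \<epsilon> where "0 < \<epsilon>" and modulus: "\<And>A b x. param_norm N (A - A0) (b - b0) < \<epsilon> \<Longrightarrow>
      x \<in> feas A b \<Longrightarrow> ndist N x (feas A0 b0) \<le> ereal (\<kappa> * param_norm N (A - A0) (b - b0))"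
    using assms unfolding Lipusc_moduli_def by blast
  obtain \<rho> a' b' z where "\<rho> < \<epsilon>"
    and close: "\<And>t. \<bar>a' t - A0 $ t $ i0 / c\<bar> \<le> \<rho> \<and> \<bar>b' t - b0 $ t\<bar> \<le> \<rho>"
    and feasible: "\<And>t. a' t * z \<le> b' t" and excess: "\<kappa> * \<rho> < z - c * xbar $ i0"
    using perturbed_excess_gt[OF _ \<open>0 < \<epsilon>\<close>] less by (metis not_le)
  define A :: "real^'n^'m" where "A = (\<chi> t. vec (c * a' t))"
  define b :: "real^'m" where "b = (\<chi> t. b' t)"
  define x :: "real^'n" where "x = vec (z / c)"
  have slope_A: "A $ t $ i0 / c = a' t" for t using scale_nonzero by (simp add: A_def)
  have close_A: "param_norm N (A - A0) (b - b0) \<le> \<rho>"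
    using close by (intro param_norm_le) (simp add: dual_norm_eq_slope diff_divide_distrib slope_A b_def)
  have "x \<in> feas A b"
    using feasible scale_nonzero by (simp add: feas_def inner_eq_slope_coord slope_A x_def b_def)
  then have "ndist N x (feas A0 b0) \<le> ereal (\<kappa> * param_norm N (A - A0) (b - b0))"
    using close_A \<open>\<rho> < \<epsilon>\<close> by (intro modulus) auto
  also have "\<dots> \<le> ereal (\<kappa> * \<rho>)" using mult_left_mono[OF close_A \<open>0 \<le> \<kappa>\<close>] by simp
  also have "\<dots> < ereal (max 0 (c * x $ i0 - c * xbar $ i0))"
    using excess unfolding x_def coord_of_scalar less_ereal.simps(1) by (simp add: less_max_iff_disj)
  finally show False by (simp add: ndist_halfline)
qed

lemma Lipusc_halfline:
  "Lipusc N A0 b0 = ereal ((N xbar + 1) / Max ((\<lambda>t. dual_norm N (A0 $ t)) ` active A0 b0 xbar))"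
proof -
  have "active A0 b0 xbar = {t. A0 $ t $ i0 / c * (c * xbar $ i0) = b0 $ t}"
    by (simp add: active_def inner_eq_slope_coord)
  moreover have "dual_norm N (A0 $ t) = A0 $ t $ i0 / c" for t
    unfolding dual_norm_eq_slope using slope_nonneg[of t] by (rule abs_of_nonneg)
  ultimately have "(N xbar + 1) / Max ((\<lambda>t. dual_norm N (A0 $ t)) ` active A0 b0 xbar)
      = (\<bar>c * xbar $ i0\<bar> + 1) / max_active_slope"
    by (simp add: max_active_slope_def norm_eq_coord)
  moreover have "Inf (ereal ` Lipusc_moduli N A0 b0) = ereal ((\<bar>c * xbar $ i0\<bar> + 1) / max_active_slope)"
    using Lipusc_modulus_above Lipusc_modulus_below by (rule Inf_ereal_image_eq)
  ultimately show ?thesis by (simp add: Lipusc_eq_Inf_moduli)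
qed

end

lemma scalar_system_halfline:
  fixes a b :: "'m::finite \<Rightarrow> real"
  assumes "\<forall>t. a t * z0 \<le> b t" "\<not> (\<forall>z t. a t * z \<le> b t)" "\<not> bounded {z. \<forall>t. a t * z \<le> b t}"
  obtains xb where "\<And>z. (\<forall>t. a t * z \<le> b t) \<longleftrightarrow> z \<le> xb"
    | xb where "\<And>z. (\<forall>t. a t * z \<le> b t) \<longleftrightarrow> xb \<le> z"
proof -
  define U where "U = {t. 0 < a t}"
  define W where "W = {t. a t < 0}"
  have "a t * z \<le> b t \<longleftrightarrow> (t \<in> U \<longrightarrow> z \<le> b t / a t) \<and> (t \<in> W \<longrightarrow> b t / a t \<le> z)" for t z
  proof (cases "a t" "0::real" rule: linorder_cases)
    case equal
    then show ?thesis using assms(1)[rule_format, of t] by (simp add: U_def W_def)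
  qed (simp_all add: U_def W_def pos_le_divide_eq neg_divide_le_eq mult.commute)
  then have feasible_iff: "(\<forall>t. a t * z \<le> b t) \<longleftrightarrow> (\<forall>t\<in>U. z \<le> b t / a t) \<and> (\<forall>t\<in>W. b t / a t \<le> z)" for z
    by blast
  consider "U = {}" "W = {}" | "U \<noteq> {}" "W \<noteq> {}" | "U = {}" "W \<noteq> {}" | "U \<noteq> {}" "W = {}"
    by blast
  then show thesis
  proof cases
    case 1
    then show ?thesis using assms(2) feasible_iff by blast
  next
    case 2
    then obtain tu tw where "tu \<in> U" "tw \<in> W" by blast
    then have "{z. \<forall>t. a t * z \<le> b t} \<subseteq> {b tw / a tw .. b tu / a tu}" using feasible_iff by auto
    then show ?thesis using assms(3) bounded_closed_interval bounded_subset by blast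
  next
    case 3
    then show ?thesis using feasible_iff by (intro that(2)[of "Max ((\<lambda>t. b t / a t) ` W)"]) simp
  next
    case 4
    then show ?thesis using feasible_iff by (intro that(1)[of "Min ((\<lambda>t. b t / a t) ` U)"]) simp
  qed
qed

lemma feas_one_dim_halfline:
  fixes A0 :: "real^'n^'m::finite" and i0 :: 'n
  assumes "UNIV = {i0}" "feas A0 b0 \<noteq> {}" "feas A0 b0 \<noteq> UNIV" "\<not> bounded (feas A0 b0)"
  obtains xbar where "feas A0 b0 = {x. \<forall>i. x $ i \<le> xbar $ i}"
    | xbar where "feas A0 b0 = {x. \<forall>i. xbar $ i \<le> x $ i}"
proof -
  have all_i: "(\<forall>i. P i) \<longleftrightarrow> P i0" for P using assms(1) by (metis UNIV_I singletonD)
  have feas_iff: "x \<in> feas A0 b0 \<longleftrightarrow> (\<forall>t. A0 $ t $ i0 * x $ i0 \<le> b0 $ t)" for x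
    by (simp add: feas_def inner_one_dim[OF assms(1)])
  obtain z0 where "\<forall>t. A0 $ t $ i0 * z0 \<le> b0 $ t" using assms(2) feas_iff by blast
  moreover have "\<not> (\<forall>z t. A0 $ t $ i0 * z \<le> b0 $ t)" using assms(3) feas_iff by auto
  moreover have "\<not> bounded {z. \<forall>t. A0 $ t $ i0 * z \<le> b0 $ t}"
  proof
    assume "bounded {z. \<forall>t. A0 $ t $ i0 * z \<le> b0 $ t}"
    then obtain M where M: "\<And>z. \<forall>t. A0 $ t $ i0 * z \<le> b0 $ t \<Longrightarrow> \<bar>z\<bar> \<le> M"
      by (auto simp: bounded_iff)
    have "norm x \<le> M" if "x \<in> feas A0 b0" for x
    proof -
      have "norm x \<le> \<bar>x $ i0\<bar>" using norm_le_l1_cart[of x] by (simp add: assms(1))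
      also have "\<dots> \<le> M" using M that feas_iff by blast
      finally show ?thesis .
    qed
    then show False using assms(4) by (auto simp: bounded_iff)
  qed
  ultimately consider xb where "\<And>z. (\<forall>t. A0 $ t $ i0 * z \<le> b0 $ t) \<longleftrightarrow> z \<le> xb"
    | xb where "\<And>z. (\<forall>t. A0 $ t $ i0 * z \<le> b0 $ t) \<longleftrightarrow> xb \<le> z"
    by (rule scalar_system_halfline) blast+
  then show thesis
  proof cases
    case (1 xb)
    then show ?thesis using feas_iff all_i by (intro that(1)[of "vec xb"]) auto
  next
    case (2 xb)
    then show ?thesis using feas_iff all_i by (intro that(2)[of "vec xb"]) auto
  qed
qed

lemma Lipusc_one_dim_halfline:
  fixes N :: "real^'n \<Rightarrow> real" and A0 :: "real^'n^'m::finite"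
  assumes "is_norm N" "CARD('n) = 1"
    and "feas A0 b0 = {x. \<forall>i. x $ i \<le> xbar $ i} \<or> feas A0 b0 = {x. \<forall>i. xbar $ i \<le> x $ i}"
  shows "Lipusc N A0 b0 = ereal ((N xbar + 1) / Max ((\<lambda>t. dual_norm N (A0 $ t)) ` active A0 b0 xbar))"
proof -
  obtain i0 :: 'n where i0: "UNIV = {i0}" using assms(2) by (metis card_1_singletonE)
  then have all_i: "(\<forall>i. P i) \<longleftrightarrow> P i0" for P by (metis UNIV_I singletonD)
  have c: "0 < N (vec 1)" by (rule is_norm_vec_one_pos[OF assms(1)])
  from assms(3) consider
      "feas A0 b0 = {x. N (vec 1) * x $ i0 \<le> N (vec 1) * xbar $ i0}"
    | "feas A0 b0 = {x. - N (vec 1) * x $ i0 \<le> - N (vec 1) * xbar $ i0}"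
    using c by (auto simp: all_i)
  then show ?thesis
  proof cases
    case 1
    show ?thesis by (rule Lipusc_halfline[OF assms(1) i0 _ 1]) (use c in simp)
  next
    case 2
    show ?thesis by (rule Lipusc_halfline[OF assms(1) i0 _ 2]) (use c in simp)
  qed
qed

section \<open>Unbounded polyhedra in dimension at least two\<close>

lemma unbounded_polyhedron_recession:
  fixes a :: "'m::finite \<Rightarrow> real^'n" and b :: "'m \<Rightarrow> real"
  assumes "\<not> bounded {x. \<forall>t. a t \<bullet> x \<le> b t}"
  obtains d where "d \<noteq> 0" "\<And>t. a t \<bullet> d \<le> 0"
proof -
  have "\<forall>M. \<exists>y. (\<forall>t. a t \<bullet> y \<le> b t) \<and> M < norm y"
    using assms by (simp add: bounded_iff not_le)
  then have "\<forall>k::nat. \<exists>y. (\<forall>t. a t \<bullet> y \<le> b t) \<and> real k + 1 < norm y" by blast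
  then obtain y where y: "\<And>k t. a t \<bullet> y k \<le> b t" "\<And>k. real k + 1 < norm (y k)" by metis
  have y_pos: "0 < norm (y k)" for k using y(2)[of k] by linarith
  define u where "u k = y k /\<^sub>R norm (y k)" for k
  have "\<forall>k. u k \<in> sphere 0 1" using y_pos by (simp add: u_def)
  then obtain d r where d: "d \<in> sphere (0::real^'n) 1" and "strict_mono r" and lim: "(u \<circ> r) \<longlonglongrightarrow> d"
    by (rule seq_compactE[OF compact_imp_seq_compact[OF compact_sphere]])
  have "a t \<bullet> d \<le> 0" for t
  proof (rule LIMSEQ_le)
    show "(\<lambda>k. a t \<bullet> (u \<circ> r) k) \<longlonglongrightarrow> a t \<bullet> d" by (intro tendsto_inner tendsto_const lim)
    show "(\<lambda>k. \<bar>b t\<bar> / real (Suc k)) \<longlonglongrightarrow> 0"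
      using LIMSEQ_Suc[OF lim_const_over_n] by simp
    have "a t \<bullet> (u \<circ> r) k \<le> \<bar>b t\<bar> / real (Suc k)" for k
    proof -
      have "real (Suc k) \<le> norm (y (r k))"
        using y(2)[of "r k"] seq_suble[OF \<open>strict_mono r\<close>, of k] by simp
      have "a t \<bullet> (u \<circ> r) k = (a t \<bullet> y (r k)) / norm (y (r k))" by (simp add: u_def divide_inverse_commute)
      also have "\<dots> \<le> \<bar>b t\<bar> / norm (y (r k))"
        using y(1)[of t "r k"] y_pos[of "r k"] by (intro divide_right_mono) auto
      also have "\<dots> \<le> \<bar>b t\<bar> / real (Suc k)"
        using \<open>real (Suc k) \<le> norm (y (r k))\<close> y_pos[of "r k"] by (intro divide_left_mono) auto
      finally show ?thesis .
    qed
    then show "\<exists>N. \<forall>k\<ge>N. a t \<bullet> (u \<circ> r) k \<le> \<bar>b t\<bar> / real (Suc k)" by blast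
  qed
  moreover have "d \<noteq> 0" using d by auto
  ultimately show thesis using that by blast
qed

lemma exists_ray_avoiding_origin:
  fixes d v :: "real^'n"
  assumes "2 \<le> CARD('n)" "d \<noteq> 0" "v \<noteq> 0"
  obtains w where "0 < v \<bullet> w" "\<And>\<tau>. d + \<tau> *\<^sub>R w \<noteq> 0"
proof -
  obtain u :: "real^'n" where "u \<noteq> 0" "orthogonal d u"
    using orthogonal_to_vector_exists[of d] assms(1) by auto
  then have "d \<bullet> u = 0" by (simp add: orthogonal_def)
  \<comment> \<open>Since \<open>u \<bullet> w \<noteq> 0\<close> while \<open>u \<bullet> d = 0\<close>, the ray \<open>d + \<tau> w\<close> never meets the origin.\<close>
  define w where "w = v + (if v \<bullet> u = 0 then 1 else 0) *\<^sub>R u"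
  have "0 < v \<bullet> w" using assms(3) by (simp add: w_def inner_add_right)
  moreover have "d + \<tau> *\<^sub>R w \<noteq> 0" for \<tau>
  proof
    assume "d + \<tau> *\<^sub>R w = 0"
    then have "u \<bullet> (d + \<tau> *\<^sub>R w) = 0" by simp
    then have "\<tau> * (u \<bullet> w) = 0" using \<open>d \<bullet> u = 0\<close> by (simp add: inner_add_right inner_commute)
    moreover have "u \<bullet> w \<noteq> 0"
      using \<open>u \<noteq> 0\<close> by (simp add: w_def inner_add_right inner_commute)
    ultimately have "\<tau> = 0" by simp
    with \<open>d + \<tau> *\<^sub>R w = 0\<close> assms(2) show False by simp
  qed
  ultimately show thesis by (rule that)
qed

lemma exists_tight_recession_direction:
  fixes a :: "'m::finite \<Rightarrow> real^'n"
  assumes "2 \<le> CARD('n)" "d0 \<noteq> 0" "\<And>t. a t \<bullet> d0 \<le> 0" "a t1 \<noteq> 0"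
  obtains d t0 where "d \<noteq> 0" "\<And>t. a t \<bullet> d \<le> 0" "a t0 \<noteq> 0" "a t0 \<bullet> d = 0"
proof -
  obtain w where w: "0 < a t1 \<bullet> w" "\<And>\<tau>. d0 + \<tau> *\<^sub>R w \<noteq> 0"
    using exists_ray_avoiding_origin[OF assms(1,2,4)] by blast
  define I where "I = {t. 0 < a t \<bullet> w}"
  define exit_time where "exit_time t = - (a t \<bullet> d0) / (a t \<bullet> w)" for t
  define t0 where "t0 = arg_min_on exit_time I"
  have "I \<noteq> {}" using w(1) by (auto simp: I_def)
  then have "t0 \<in> I" and t0_min: "\<And>t. t \<in> I \<Longrightarrow> exit_time t0 \<le> exit_time t"
    unfolding t0_def by (simp_all add: arg_min_if_finite(1) arg_min_least)
  have exit_eq: "exit_time t * (a t \<bullet> w) = - (a t \<bullet> d0)" if "t \<in> I" for t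
    using that by (simp add: I_def exit_time_def)
  have "0 \<le> exit_time t0"
    using assms(3)[of t0] \<open>t0 \<in> I\<close> by (simp add: exit_time_def I_def divide_nonpos_pos)
  let ?d = "d0 + exit_time t0 *\<^sub>R w"
  have "a t \<bullet> ?d \<le> 0" for t
  proof (cases "t \<in> I")
    case True
    then have "exit_time t0 * (a t \<bullet> w) \<le> exit_time t * (a t \<bullet> w)"
      using t0_min by (intro mult_right_mono) (auto simp: I_def)
    with exit_eq[OF True] show ?thesis unfolding inner_add_right inner_scaleR_right by linarith
  next
    case False
    then have "exit_time t0 * (a t \<bullet> w) \<le> 0"
      using \<open>0 \<le> exit_time t0\<close> by (simp add: I_def mult_nonneg_nonpos)
    then show ?thesis using assms(3)[of t] unfolding inner_add_right inner_scaleR_right by linarith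
  qed
  moreover have "a t0 \<bullet> ?d = 0"
    using exit_eq[OF \<open>t0 \<in> I\<close>] unfolding inner_add_right inner_scaleR_right by linarith
  moreover have "a t0 \<noteq> 0" using \<open>t0 \<in> I\<close> by (auto simp: I_def)
  ultimately show thesis using that w(2) by blast
qed

lemma tilted_system_feasible:
  assumes "x0 \<in> feas A0 b0" "\<And>t. A0 $ t \<bullet> d \<le> 0" "l \<bullet> d = 1" "l \<bullet> e = 0"
    and "0 \<le> \<delta>" "0 \<le> R" "0 \<le> l \<bullet> x0 + R"
  shows "x0 + R *\<^sub>R d + (\<delta> * (l \<bullet> x0 + R)) *\<^sub>R e \<in> feas (\<chi> t. A0 $ t - (\<delta> * \<bar>A0 $ t \<bullet> e\<bar>) *\<^sub>R l) b0"
proof -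
  let ?x = "x0 + R *\<^sub>R d + (\<delta> * (l \<bullet> x0 + R)) *\<^sub>R e"
  have lx: "l \<bullet> ?x = l \<bullet> x0 + R" using assms(3,4) by (simp add: inner_add_right)
  have "A0 $ t \<bullet> ?x - \<delta> * \<bar>A0 $ t \<bullet> e\<bar> * (l \<bullet> ?x) \<le> b0 $ t" for t
  proof -
    have "A0 $ t \<bullet> x0 \<le> b0 $ t" using assms(1) by (simp add: feas_def)
    moreover have "R * (A0 $ t \<bullet> d) \<le> 0" using assms(2,6) by (simp add: mult_nonneg_nonpos)
    moreover have "(\<delta> * (l \<bullet> x0 + R)) * (A0 $ t \<bullet> e) \<le> (\<delta> * (l \<bullet> x0 + R)) * \<bar>A0 $ t \<bullet> e\<bar>"
      using assms(5,7) by (intro mult_left_mono) auto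
    ultimately show ?thesis unfolding lx by (simp add: inner_add_right algebra_simps)
  qed
  then show ?thesis by (simp add: feas_def inner_diff_left)
qed

lemma ndist_ge_halfspace:
  assumes "0 < m" "\<And>x. m * norm x \<le> N x" "e \<noteq> 0" "\<And>\<omega>. \<omega> \<in> \<Omega> \<Longrightarrow> e \<bullet> \<omega> \<le> \<beta>"
  shows "ereal (m * (e \<bullet> x - \<beta>) / norm e) \<le> ndist N x \<Omega>"
proof (rule ndist_ge)
  fix \<omega> assume "\<omega> \<in> \<Omega>"
  then have "e \<bullet> x - \<beta> \<le> e \<bullet> (x - \<omega>)" using assms(4) by (simp add: inner_diff_right)
  also have "\<dots> \<le> norm e * norm (x - \<omega>)" by (rule order_trans[OF abs_ge_self Cauchy_Schwarz_ineq2])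
  finally have "m * (e \<bullet> x - \<beta>) \<le> norm e * (m * norm (x - \<omega>))"
    using assms(1) by (simp add: mult_left_mono mult.left_commute)
  also have "\<dots> \<le> norm e * N (x - \<omega>)" using assms(2) by (simp add: mult_left_mono)
  finally show "m * (e \<bullet> x - \<beta>) / norm e \<le> N (x - \<omega>)"
    using assms(3) by (simp add: divide_le_eq mult.commute)
qed

lemma exists_small_tilt:
  fixes N :: "real^'n \<Rightarrow> real" and A0 :: "real^'n^'m::finite"
  assumes "is_norm N" "0 < \<epsilon>"
  obtains \<delta> where "0 < \<delta>" "param_norm N ((\<chi> t. A0 $ t - (\<delta> * \<bar>A0 $ t \<bullet> e\<bar>) *\<^sub>R l) - A0) 0 < \<epsilon>"
proof -
  obtain m where m: "0 < m" "\<And>x. m * norm x \<le> N x" using is_norm_ge_norm[OF assms(1)] by blast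
  have "\<forall>\<^sub>F \<delta> in at_right 0. \<forall>t. \<delta> * \<bar>A0 $ t \<bullet> e\<bar> * norm l / m < \<epsilon>"
  proof (rule eventually_all_finite)
    fix t
    have "((\<lambda>\<delta>. \<delta> * \<bar>A0 $ t \<bullet> e\<bar> * norm l / m) \<longlongrightarrow> 0) (at_right 0)"
      using m(1) by (auto intro!: tendsto_eq_intros)
    then show "\<forall>\<^sub>F \<delta> in at_right 0. \<delta> * \<bar>A0 $ t \<bullet> e\<bar> * norm l / m < \<epsilon>"
      using assms(2) by (rule order_tendstoD(2))
  qed
  with eventually_at_right_less obtain \<delta> where "0 < \<delta>"
    and small: "\<And>t. \<delta> * \<bar>A0 $ t \<bullet> e\<bar> * norm l / m < \<epsilon>"
    using eventually_happens'[OF trivial_limit_at_right_real eventually_conj] by blast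
  have "param_norm N ((\<chi> t. A0 $ t - (\<delta> * \<bar>A0 $ t \<bullet> e\<bar>) *\<^sub>R l) - A0) 0 < \<epsilon>"
  proof (rule param_norm_less)
    fix t
    let ?A = "(\<chi> t. A0 $ t - (\<delta> * \<bar>A0 $ t \<bullet> e\<bar>) *\<^sub>R l) - A0"
    have "dual_norm N (?A $ t) \<le> norm (?A $ t) / m" by (rule dual_norm_le_norm[OF assms(1) m])
    also have "\<dots> = \<delta> * \<bar>A0 $ t \<bullet> e\<bar> * norm l / m" using \<open>0 < \<delta>\<close> by (simp add: abs_mult)
    finally show "max (dual_norm N (?A $ t)) \<bar>0 $ t\<bar> < \<epsilon>" using small[of t] assms(2) by simp
  qed
  with \<open>0 < \<delta>\<close> show thesis by (rule that)
qed

lemma Lipusc_moduli_empty_if_tight_direction: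
  fixes N :: "real^'n \<Rightarrow> real" and A0 :: "real^'n^'m::finite"
  assumes "is_norm N" "x0 \<in> feas A0 b0" "d \<noteq> 0" "\<And>t. A0 $ t \<bullet> d \<le> 0"
    and "A0 $ t0 \<noteq> 0" "A0 $ t0 \<bullet> d = 0"
  shows "Lipusc_moduli N A0 b0 = {}"
proof (rule ccontr)
  assume "Lipusc_moduli N A0 b0 \<noteq> {}"
  then obtain \<kappa> \<epsilon> where "0 \<le> \<kappa>" "0 < \<epsilon>" and modulus: "\<And>A b x. param_norm N (A - A0) (b - b0) < \<epsilon> \<Longrightarrow>
      x \<in> feas A b \<Longrightarrow> ndist N x (feas A0 b0) \<le> ereal (\<kappa> * param_norm N (A - A0) (b - b0))"
    unfolding Lipusc_moduli_def by blast
  obtain m where m: "0 < m" "\<And>x. m * norm x \<le> N x" using is_norm_ge_norm[OF assms(1)] by blast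
  define e where "e = A0 $ t0"
  define l where "l = d /\<^sub>R (d \<bullet> d)"
  have "l \<bullet> d = 1" "l \<bullet> e = 0" using assms(3,6) by (simp_all add: l_def e_def inner_commute)
  obtain \<delta> where "0 < \<delta>" and "param_norm N ((\<chi> t. A0 $ t - (\<delta> * \<bar>A0 $ t \<bullet> e\<bar>) *\<^sub>R l) - A0) 0 < \<epsilon>"
    using exists_small_tilt[OF assms(1) \<open>0 < \<epsilon>\<close>] by blast
  define A :: "real^'n^'m" where "A = (\<chi> t. A0 $ t - (\<delta> * \<bar>A0 $ t \<bullet> e\<bar>) *\<^sub>R l)"
  have close: "param_norm N (A - A0) (b0 - b0) < \<epsilon>" using \<open>param_norm N _ 0 < \<epsilon>\<close> by (simp add: A_def)
  have "filterlim (\<lambda>R. e \<bullet> x0 + \<delta> * (e \<bullet> e) * (l \<bullet> x0 + R)) at_top at_top"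
    using \<open>0 < \<delta>\<close> assms(5) unfolding e_def
    by (intro filterlim_tendsto_add_at_top[OF tendsto_const] filterlim_tendsto_pos_mult_at_top[OF tendsto_const]
        filterlim_tendsto_add_at_top[OF tendsto_const filterlim_ident]) auto
  then have "\<forall>\<^sub>F R in at_top. \<kappa> * \<epsilon> * norm e / m + b0 $ t0 < e \<bullet> x0 + \<delta> * (e \<bullet> e) * (l \<bullet> x0 + R)"
    by (simp add: filterlim_at_top_dense)
  moreover have "\<forall>\<^sub>F R in at_top. \<bar>l \<bullet> x0\<bar> \<le> R" by (rule eventually_ge_at_top)
  ultimately obtain R where R: "\<bar>l \<bullet> x0\<bar> \<le> R"
    and far: "\<kappa> * \<epsilon> * norm e / m + b0 $ t0 < e \<bullet> x0 + \<delta> * (e \<bullet> e) * (l \<bullet> x0 + R)"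
    using eventually_happens'[OF trivial_limit_at_top_linorder eventually_conj] by blast
  define x where "x = x0 + R *\<^sub>R d + (\<delta> * (l \<bullet> x0 + R)) *\<^sub>R e"
  have "x \<in> feas A b0" unfolding x_def A_def
    using \<open>0 < \<delta>\<close> R by (intro tilted_system_feasible[OF assms(2,4) \<open>l \<bullet> d = 1\<close> \<open>l \<bullet> e = 0\<close>]) auto
  then have "ndist N x (feas A0 b0) \<le> ereal (\<kappa> * param_norm N (A - A0) (b0 - b0))"
    using close by (rule modulus[rotated])
  also have "\<dots> \<le> ereal (\<kappa> * \<epsilon>)" using close \<open>0 \<le> \<kappa>\<close> by (simp add: mult_left_mono)
  also have "\<dots> < ereal (m * (e \<bullet> x - b0 $ t0) / norm e)"
    using far m(1) assms(5) assms(6)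
    by (simp add: x_def e_def inner_add_right field_simps)
  also have "\<dots> \<le> ndist N x (feas A0 b0)"
    using m assms(5) by (intro ndist_ge_halfspace) (auto simp: e_def feas_def)
  finally show False by simp
qed

lemma Lipusc_unbounded_multidim:
  fixes N :: "real^'n \<Rightarrow> real" and A0 :: "real^'n^'m::finite"
  assumes "is_norm N" "2 \<le> CARD('n)" "feas A0 b0 \<noteq> {}" "feas A0 b0 \<noteq> UNIV"
    and "\<not> bounded (feas A0 b0)"
  shows "Lipusc N A0 b0 = \<infinity>"
proof -
  obtain x0 where x0: "x0 \<in> feas A0 b0" using assms(3) by blast
  obtain d0 where "d0 \<noteq> 0" "\<And>t. A0 $ t \<bullet> d0 \<le> 0"
    using unbounded_polyhedron_recession[of "\<lambda>t. A0 $ t" "\<lambda>t. b0 $ t"] assms(5)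
    by (auto simp: feas_def)
  have "\<exists>t1. A0 $ t1 \<noteq> 0"
  proof (rule ccontr)
    assume "\<nexists>t1. A0 $ t1 \<noteq> 0"
    then have zero: "A0 $ t = 0" for t by blast
    have "A0 $ t \<bullet> x0 \<le> b0 $ t" for t using x0 by (simp add: feas_def)
    then have "feas A0 b0 = UNIV" by (simp add: feas_def zero)
    with assms(4) show False by blast
  qed
  then obtain t1 where "A0 $ t1 \<noteq> 0" by blast
  obtain d t0 where "d \<noteq> 0" "\<And>t. A0 $ t \<bullet> d \<le> 0" "A0 $ t0 \<noteq> 0" "A0 $ t0 \<bullet> d = 0"
    using exists_tight_recession_direction[OF assms(2) \<open>d0 \<noteq> 0\<close>] \<open>\<And>t. A0 $ t \<bullet> d0 \<le> 0\<close> \<open>A0 $ t1 \<noteq> 0\<close>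
    by blast
  then have "Lipusc_moduli N A0 b0 = {}"
    using Lipusc_moduli_empty_if_tight_direction[OF assms(1) x0] by blast
  then show ?thesis by (simp add: Lipusc_eq_Inf_moduli top_ereal_def)
qed

lemma Lipusc_eq_infinity:
  fixes N :: "real^'n \<Rightarrow> real" and A0 :: "real^'n^'m::finite"
  assumes "is_norm N" "feas A0 b0 \<noteq> {}" "feas A0 b0 \<noteq> UNIV" "\<not> bounded (feas A0 b0)"
    and "\<not> (\<exists>xbar. CARD('n) = 1 \<and>
          (feas A0 b0 = {x. \<forall>i. x $ i \<le> xbar $ i} \<or> feas A0 b0 = {x. \<forall>i. xbar $ i \<le> x $ i}))"
  shows "Lipusc N A0 b0 = \<infinity>"
proof -
  have "CARD('n) \<noteq> 1"
  proof
    assume "CARD('n) = 1"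
    then obtain i0 :: 'n where "UNIV = {i0}" by (metis card_1_singletonE)
    then show False
      using feas_one_dim_halfline[OF _ assms(2-4)] assms(5) \<open>CARD('n) = 1\<close> by metis
  qed
  moreover have "CARD('n) \<noteq> 0" by simp
  ultimately have "2 \<le> CARD('n)" by linarith
  then show ?thesis using Lipusc_unbounded_multidim[OF assms(1) _ assms(2-4)] by blast
qed

theorem proposition2:
  fixes N :: "real^'n \<Rightarrow> real"
    and A0 :: "real^'n^'m::finite" and b0 :: "real^'m"
  assumes "is_norm N"
    and "feas A0 b0 \<noteq> {}"
    and "\<not> (\<exists>M. \<forall>x\<in>feas A0 b0. N x \<le> M)"
  shows "(feas A0 b0 = UNIV \<longrightarrow> Lipusc N A0 b0 = 0)
    \<and> (\<forall>xbar. CARD('n) = 1 \<and>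
          (feas A0 b0 = {x. \<forall>i. x $ i \<le> xbar $ i} \<or> feas A0 b0 = {x. \<forall>i. xbar $ i \<le> x $ i})
        \<longrightarrow> Lipusc N A0 b0 =
            ereal ((N xbar + 1) / Max ((\<lambda>t. dual_norm N (A0 $ t)) ` active A0 b0 xbar)))
    \<and> (feas A0 b0 \<noteq> UNIV \<and>
        \<not> (\<exists>xbar. CARD('n) = 1 \<and>
          (feas A0 b0 = {x. \<forall>i. x $ i \<le> xbar $ i} \<or> feas A0 b0 = {x. \<forall>i. xbar $ i \<le> x $ i}))
        \<longrightarrow> Lipusc N A0 b0 = \<infinity>)"
proof (intro conjI impI allI)
  show "Lipusc N A0 b0 = 0" if "feas A0 b0 = UNIV" using Lipusc_UNIV[OF assms(1) that] .
  show "Lipusc N A0 b0 = ereal ((N xbar + 1) / Max ((\<lambda>t. dual_norm N (A0 $ t)) ` active A0 b0 xbar))"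
    if "CARD('n) = 1 \<and>
      (feas A0 b0 = {x. \<forall>i. x $ i \<le> xbar $ i} \<or> feas A0 b0 = {x. \<forall>i. xbar $ i \<le> x $ i})" for xbar
    using that Lipusc_one_dim_halfline[OF assms(1)] by blast
  have "\<not> bounded (feas A0 b0)" using assms(3) bounded_iff_is_norm_bounded[OF assms(1)] by blast
  then show "Lipusc N A0 b0 = \<infinity>"
    if "feas A0 b0 \<noteq> UNIV \<and> \<not> (\<exists>xbar. CARD('n) = 1 \<and>
      (feas A0 b0 = {x. \<forall>i. x $ i \<le> xbar $ i} \<or> feas A0 b0 = {x. \<forall>i. xbar $ i \<le> x $ i}))"
    using that Lipusc_eq_infinity[OF assms(1,2)] by blast
qed

end
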